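(* For every $\theta\in\mathbb{R}^p$ and every $i\in\{1,\dots,p\}$, define $\Psi:\mathbb{R}^p\to\mathbb{R}$ by $\Psi(\omega)=\sum_{\mathrm p\in\mathrm P}\prod_{k\in\mathrm p}\omega_k$ (so that $\Psi(\theta\odot\theta)=\|\Phi(\theta)\|_2^2$). Then $$G_{ii}=\frac{\partial\Psi}{\partial\omega_i}(\theta\odot\theta),$$ i.e. $\mathrm{diag}(G)=\nabla_{\theta^2}\|\Phi(\theta)\|_2^2$, the gradient of $\|\Phi(\theta)\|_2^2$ with respect to the vector of squared parameters $\theta^2=\theta\odot\theta$.
   Context: $\mathcal G=(V,E)$ is a finite DAG; input neurons have no incoming edges, output neurons no outgoing edges. $\theta\in\mathbb{R}^p$ consists of one weight $\theta_{u\to v}$ per edge and one bias $b_v$ per non-input neuron $v$. A path $\mathrm p=v_0\to\cdots\to v_d$ ($d\ge0$) follows edges and ends at an output neuron (for $d=0$, $v_0$ is non-input); $\mathrm P$ is the set of paths, $q=|\mathrm P|$. For a path $\mathrm p$, write $k\in\mathrm p$ for the parameter indices of its edges together with the index of $b_{v_0}$ when $v_0$ is not an input neuron. The path-lifting $\Phi:\mathbb{R}^p\to\mathbb{R}^q$ is $\Phi_{\mathrm p}(\theta)=\prod_{k\in\mathrm p}\theta_k$. $G=\partial\Phi(\theta)^\top\partial\Phi(\theta)\in\mathbb{R}^{p\times p}$ with $\partial\Phi(\theta)$ the Jacobian of $\Phi$; $\odot$ is the entrywise product. *)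

theory Defs
  imports "HOL-Analysis.Analysis"
begin

text \<open>A network: vertex set V, edge relation E.  Parameter indices are
  Inl (u,v) for the weight of edge u->v and Inr v for the bias of a
  non-input neuron v.\<close>

type_synonym 'v param = "('v \<times> 'v) + 'v"

definition is_input :: "'v set \<Rightarrow> ('v \<times> 'v) set \<Rightarrow> 'v \<Rightarrow> bool" where
  "is_input V E v \<longleftrightarrow> v \<in> V \<and> (\<nexists>u. (u, v) \<in> E)"

definition is_output :: "'v set \<Rightarrow> ('v \<times> 'v) set \<Rightarrow> 'v \<Rightarrow> bool" where
  "is_output V E v \<longleftrightarrow> v \<in> V \<and> (\<nexists>w. (v, w) \<in> E)"

definition is_dag :: "'v set \<Rightarrow> ('v \<times> 'v) set \<Rightarrow> bool" where
  "is_dag V E \<longleftrightarrow> finite V \<and> E \<subseteq> V \<times> V \<and> acyclic E"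

definition param_idx :: "'v set \<Rightarrow> ('v \<times> 'v) set \<Rightarrow> 'v param set" where
  "param_idx V E = Inl ` E \<union> Inr ` {v \<in> V. \<not> is_input V E v}"

definition is_path :: "'v set \<Rightarrow> ('v \<times> 'v) set \<Rightarrow> 'v list \<Rightarrow> bool" where
  "is_path V E ps \<longleftrightarrow> ps \<noteq> [] \<and> set ps \<subseteq> V
     \<and> (\<forall>j. Suc j < length ps \<longrightarrow> (ps ! j, ps ! Suc j) \<in> E)
     \<and> is_output V E (last ps)
     \<and> (length ps = 1 \<longrightarrow> \<not> is_input V E (hd ps))"

definition paths :: "'v set \<Rightarrow> ('v \<times> 'v) set \<Rightarrow> 'v list set" where
  "paths V E = {ps. is_path V E ps}"

definition path_params :: "'v set \<Rightarrow> ('v \<times> 'v) set \<Rightarrow> 'v list \<Rightarrow> 'v param set" where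
  "path_params V E ps = Inl ` set (zip ps (tl ps))
     \<union> (if is_input V E (hd ps) then {} else {Inr (hd ps)})"

definition Phi :: "'v set \<Rightarrow> ('v \<times> 'v) set \<Rightarrow> ('v param \<Rightarrow> real) \<Rightarrow> 'v list \<Rightarrow> real" where
  "Phi V E \<theta> ps = (\<Prod>k\<in>path_params V E ps. \<theta> k)"

definition jac :: "'v set \<Rightarrow> ('v \<times> 'v) set \<Rightarrow> ('v param \<Rightarrow> real) \<Rightarrow> 'v list \<Rightarrow> 'v param \<Rightarrow> real" where
  "jac V E \<theta> ps i = deriv (\<lambda>t. Phi V E (\<theta>(i := t)) ps) (\<theta> i)"

definition Gmat :: "'v set \<Rightarrow> ('v \<times> 'v) set \<Rightarrow> ('v param \<Rightarrow> real) \<Rightarrow> 'v param \<Rightarrow> 'v param \<Rightarrow> real" where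
  "Gmat V E \<theta> i j = (\<Sum>ps\<in>paths V E. jac V E \<theta> ps i * jac V E \<theta> ps j)"

definition Psi :: "'v set \<Rightarrow> ('v \<times> 'v) set \<Rightarrow> ('v param \<Rightarrow> real) \<Rightarrow> real" where
  "Psi V E \<omega> = (\<Sum>ps\<in>paths V E. \<Prod>k\<in>path_params V E ps. \<omega> k)"

end

theory Submission
  imports Defs
begin

text \<open>Each coordinate \<Phi>_p is multiaffine in \<theta>: as a function of \<theta>_i alone it is
  t \<mapsto> t \<cdot> \<Prod>_{k\<in>p, k\<noteq>i} \<theta>_k when i \<in> p and constant otherwise.  Hence
  (\<partial>\<Phi>_p/\<partial>\<theta>_i)^2 = \<Prod>_{k\<in>p, k\<noteq>i} \<theta>_k^2 (or 0), which is precisely the partial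
  derivative in \<omega>_i of the monomial \<Prod>_{k\<in>p} \<omega>_k at \<omega> = \<theta> \<odot> \<theta>.  Summing over
  the paths gives G_ii = \<partial>\<Psi>/\<partial>\<omega>_i (\<theta> \<odot> \<theta>).\<close>

lemma prod_fun_upd:
  assumes "finite S"
  shows "(\<Prod>k\<in>S. (f(i := t)) k) =
    (if i \<in> S then t * (\<Prod>k\<in>S - {i}. f k) else (\<Prod>k\<in>S. f k))"
proof (cases "i \<in> S")
  case True
  have "(\<Prod>k\<in>S. (f(i := t)) k) = t * (\<Prod>k\<in>S - {i}. (f(i := t)) k)"
    using prod.remove[OF assms True, of "f(i := t)"] by simp
  also have "(\<Prod>k\<in>S - {i}. (f(i := t)) k) = (\<Prod>k\<in>S - {i}. f k)"
    by (rule prod.cong) auto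
  finally show ?thesis
    using True by simp
next
  case False
  then show ?thesis
    by (auto intro!: prod.cong)
qed

lemma has_real_derivative_prod_fun_upd:
  assumes "finite S"
  shows "((\<lambda>t. \<Prod>k\<in>S. (f(i := t)) k) has_real_derivative
    (if i \<in> S then \<Prod>k\<in>S - {i}. f k else 0)) (at x)"
  unfolding prod_fun_upd[OF assms]
  by (cases "i \<in> S") (auto intro!: derivative_eq_intros)

lemma finite_path_params: "finite (path_params V E ps)"
  unfolding path_params_def by auto

lemma jac_eq:
  "jac V E \<theta> ps i =
    (if i \<in> path_params V E ps then \<Prod>k\<in>path_params V E ps - {i}. \<theta> k else 0)"
  unfolding jac_def Phi_def
  by (rule DERIV_imp_deriv[OF has_real_derivative_prod_fun_upd[OF finite_path_params]])

lemma Gmat_diag_eq: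
  "Gmat V E \<theta> i i =
    (\<Sum>ps\<in>paths V E. if i \<in> path_params V E ps
      then \<Prod>k\<in>path_params V E ps - {i}. \<theta> k * \<theta> k else 0)"
  unfolding Gmat_def jac_eq
  by (rule sum.cong) (auto simp: prod.distrib)

text \<open>When the set of paths is infinite both sides are 0 by the convention for
  infinite sums, so no finiteness hypothesis is needed.\<close>

lemma deriv_Psi_fun_upd:
  "deriv (\<lambda>t. Psi V E (w(i := t))) x =
    (\<Sum>ps\<in>paths V E. if i \<in> path_params V E ps
      then \<Prod>k\<in>path_params V E ps - {i}. w k else 0)"
proof (cases "finite (paths V E)")
  case True
  show ?thesis
    unfolding Psi_def
    by (rule DERIV_imp_deriv, rule DERIV_sum)
       (rule has_real_derivative_prod_fun_upd[OF finite_path_params])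
next
  case False
  then show ?thesis
    unfolding Psi_def by simp
qed

text \<open>The identity is purely algebraic: neither acyclicity nor i being a parameter
  index is used.\<close>

theorem propositionG1:
  fixes V :: "'v set" and E :: "('v \<times> 'v) set"
    and \<theta> :: "'v param \<Rightarrow> real" and i :: "'v param"
  assumes "is_dag V E"
    and "i \<in> param_idx V E"
  shows "Gmat V E \<theta> i i
         = deriv (\<lambda>t. Psi V E ((\<lambda>k. \<theta> k * \<theta> k)(i := t))) (\<theta> i * \<theta> i)"
  unfolding Gmat_diag_eq deriv_Psi_fun_upd ..

end
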